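(* Consider a stochastic $K$-armed bandit ($K\ge2$): at each round $t$ a reward vector $\mathbf R_t\in[-R_{\max},R_{\max}]^K$ is drawn i.i.d. from a fixed distribution with mean $\mathbf r$, where $r(a)\ne r(a')$ for $a\neq a'$; let $\Delta=\min_{a\ne a'}|r(a)-r(a')|$. Let $\eta>0$, $\alpha>0$, and run LB-SGB: starting from $\boldsymbol\theta_1=\mathbf 0$, at round $t$ sample $a_t\sim\pi_{\boldsymbol\theta_t}$ (softmax policy), observe $R_t(a_t)$, form $\hat r_t(a)=\mathbb I\{a_t=a\}R_t(a_t)/\pi_{\boldsymbol\theta_t}(a)$ and the stochastic gradient $$\widehat\nabla\Phi_\eta(\boldsymbol\theta_t)=(\mathrm{diag}(\pi_{\boldsymbol\theta_t})-\pi_{\boldsymbol\theta_t}\pi_{\boldsymbol\theta_t}^\top)\hat{\mathbf r}_t+\frac1\eta(\mathbf 1-K\pi_{\boldsymbol\theta_t}),$$ and update $\boldsymbol\theta_{t+1}=\boldsymbol\theta_t+\alpha\widehat\nabla\Phi_\eta(\boldsymbol\theta_t)$. Let $\Phi_\eta(\boldsymbol\theta)=\pi_{\boldsymbol\theta}^\top\mathbf r+\frac1\eta\sum_a\log\pi_{\boldsymbol\theta}(a)$. Then for all $t\ge1$, $$\mathbb E_t\big[\|\widehat\nabla\Phi_\eta(\boldsymbol\theta_t)\|_2^2\big]\le\frac{16R_{\max}^3K^{3/2}}{\Delta^2}\|\nabla\Phi_\eta(\boldsymbol\theta_t)\|_2+b(\eta),\qquad b(\eta)=\frac{2K}{\eta}\Big(\frac{4K}{\eta}+\frac{16R_{\max}^3K^{3/2}}{\Delta^2}\Big),$$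 where $\mathbb E_t$ is the expectation over the round-$t$ randomness ($a_t$ and $\mathbf R_t$) conditional on the past.
   Context: Softmax policy: $\pi_{\boldsymbol\theta}(a)=e^{\theta(a)}/\sum_b e^{\theta(b)}$. $\mathbf 1$ is the all-ones vector. *)

theory Defs
  imports "HOL-Probability.Probability"
begin

text \<open>Arms are the elements of a finite type 'k; K = CARD('k).
  Parameter vectors and reward vectors live in real^'k (Euclidean norm).\<close>

definition softmax :: "real^'k::finite \<Rightarrow> real^'k" where
  "softmax \<theta> = (\<chi> a. exp (\<theta> $ a) / (\<Sum>b\<in>UNIV. exp (\<theta> $ b)))"

definition Phi :: "real \<Rightarrow> real^'k::finite \<Rightarrow> real^'k \<Rightarrow> real" where
  "Phi \<eta> r \<theta> = softmax \<theta> \<bullet> r + (1/\<eta>) * (\<Sum>a\<in>UNIV. ln (softmax \<theta> $ a))"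

definition rhat :: "real^'k::finite \<Rightarrow> 'k \<Rightarrow> real^'k \<Rightarrow> real^'k" where
  "rhat \<theta> a0 Rv = (\<chi> a. (if a0 = a then Rv $ a0 else 0) / softmax \<theta> $ a)"

definition est_grad :: "real \<Rightarrow> real^'k::finite \<Rightarrow> 'k \<Rightarrow> real^'k \<Rightarrow> real^'k" where
  "est_grad \<eta> \<theta> a0 Rv =
     (let p = softmax \<theta>; x = rhat \<theta> a0 Rv in
      (\<chi> i. p $ i * x $ i - p $ i * (p \<bullet> x) + (1/\<eta>) * (1 - real CARD('k) * p $ i)))"

definition gap :: "real^'k::finite \<Rightarrow> real" where
  "gap r = Min {\<bar>r $ a - r $ a'\<bar> | a a'. a \<noteq> a'}"

end

theory Submission
  imports Defs
begin

text \<open>The exact gradient splits as \<open>\<nabla>\<Phi>\<^sub>\<eta> = w + v\<close> with reward part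
  \<open>w\<^sub>i = \<pi>\<^sub>i (r\<^sub>i - \<pi>\<^sup>T r)\<close> and barrier part \<open>v\<^sub>i = (1 - K \<pi>\<^sub>i)/\<eta>\<close>, and when
  arm \<open>a\<close> is sampled the estimator equals \<open>R(a) (e\<^sub>a - \<pi>) + v\<close>. Hence its second
  moment is at most \<open>8 Rmax\<^sup>2 (1 - \<pi>\<^sub>j) + 2 \<parallel>v\<parallel>\<^sup>2\<close> for every arm \<open>j\<close>.
  Taking \<open>j\<close> with \<open>r\<^sub>j\<close> closest to \<open>\<pi>\<^sup>T r\<close>, every other arm has
  \<open>|r\<^sub>i - \<pi>\<^sup>T r| \<ge> \<Delta>/2\<close>, so \<open>\<parallel>w\<parallel>\<^sub>1 \<ge> \<Delta> (1 - \<pi>\<^sub>j)/2\<close> and, by Cauchy-Schwarz,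
  \<open>\<Delta> (1 - \<pi>\<^sub>j) \<le> 2 \<surd>K \<parallel>w\<parallel>\<close>. As the rewards, hence their means, are bounded,
  \<open>\<Delta> \<le> 2 Rmax \<le> K Rmax\<close>, which turns \<open>8 Rmax\<^sup>2 (1 - \<pi>\<^sub>j)\<close> into at most
  \<open>16 Rmax\<^sup>3 K^(3/2) \<parallel>w\<parallel> / \<Delta>\<^sup>2\<close>; finally \<open>\<parallel>v\<parallel> \<le> K/\<eta>\<close> and
  \<open>\<parallel>w\<parallel> \<le> \<parallel>\<nabla>\<Phi>\<^sub>\<eta>\<parallel> + \<parallel>v\<parallel>\<close>. The bound concerns a single round.\<close>

lemma softmax_pos: "softmax \<theta> $ a > 0"
  unfolding softmax_def by (auto intro!: divide_pos_pos sum_pos)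

lemma sum_softmax: "(\<Sum>a\<in>UNIV. softmax \<theta> $ a) = 1"
proof -
  have "(\<Sum>b\<in>UNIV. exp (\<theta> $ b)) > 0" by (auto intro!: sum_pos)
  then show ?thesis unfolding softmax_def by (simp add: sum_divide_distrib[symmetric])
qed

lemma softmax_le_1: "softmax \<theta> $ a \<le> 1"
proof -
  have "softmax \<theta> $ a \<le> (\<Sum>a\<in>UNIV. softmax \<theta> $ a)"
    by (rule member_le_sum) (auto simp: less_imp_le softmax_pos)
  then show ?thesis by (simp add: sum_softmax)
qed

lemma sum_softmax_power2_le_1: "(\<Sum>a\<in>UNIV. (softmax \<theta> $ a)\<^sup>2) \<le> 1"
proof -
  have "(\<Sum>a\<in>UNIV. (softmax \<theta> $ a)\<^sup>2) \<le> (\<Sum>a\<in>UNIV. softmax \<theta> $ a)"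
    by (rule sum_mono) (simp add: power2_eq_square mult_le_cancel_right1 softmax_le_1 softmax_pos less_imp_le)
  then show ?thesis by (simp add: sum_softmax)
qed

lemma sum_softmax_mult_compl_le:
  "(\<Sum>a\<in>UNIV. softmax \<theta> $ a * (1 - softmax \<theta> $ a)) \<le> 2 * (1 - softmax \<theta> $ j)"
proof -
  let ?p = "softmax \<theta>"
  have "(\<Sum>a\<in>UNIV. ?p $ a * (1 - ?p $ a)) \<le> (\<Sum>a\<in>UNIV. ?p $ a + (if a = j then 1 - 2 * ?p $ j else 0))"
  proof (rule sum_mono)
    fix a
    show "?p $ a * (1 - ?p $ a) \<le> ?p $ a + (if a = j then 1 - 2 * ?p $ j else 0)"
      using softmax_pos[of \<theta> a] softmax_le_1[of \<theta> a] zero_le_power2[of "1 - ?p $ a"]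
      by (auto simp: algebra_simps power2_eq_square)
  qed
  also have "\<dots> = 2 * (1 - ?p $ j)" by (simp add: sum.distrib sum_softmax)
  finally show ?thesis .
qed

definition reward_grad :: "real^'k::finite \<Rightarrow> real^'k \<Rightarrow> real^'k" where
  "reward_grad r \<theta> = (\<chi> i. softmax \<theta> $ i * (r $ i - softmax \<theta> \<bullet> r))"

definition barrier_grad :: "real \<Rightarrow> real^'k::finite \<Rightarrow> real^'k" where
  "barrier_grad \<eta> \<theta> = (\<chi> i. (1/\<eta>) * (1 - real CARD('k) * softmax \<theta> $ i))"

lemma has_derivative_vec_nth [derivative_intros]: "((\<lambda>x. x $ i) has_derivative (\<lambda>h. h $ i)) F"
  by (rule bounded_linear_imp_has_derivative[OF bounded_linear_vec_nth])

lemma has_derivative_softmax_nth [derivative_intros]: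
  "((\<lambda>\<theta>. softmax \<theta> $ a) has_derivative
    (\<lambda>h. softmax \<theta> $ a * (h $ a - softmax \<theta> \<bullet> h))) (at \<theta>)"
proof -
  define S where "S = (\<Sum>b\<in>UNIV. exp (\<theta> $ b))"
  have "S > 0" unfolding S_def by (simp add: sum_pos)
  have "softmax \<theta> \<bullet> h = (\<Sum>b\<in>UNIV. h $ b * exp (\<theta> $ b)) / S" for h
    unfolding softmax_def inner_vec_def S_def by (simp add: sum_divide_distrib mult.commute)
  with \<open>S > 0\<close> show ?thesis
    unfolding softmax_def vec_lambda_beta
    by (auto intro!: derivative_eq_intros simp: S_def[symmetric] field_simps power2_eq_square)
qed

lemma has_derivative_Phi:
  fixes \<theta> :: "real^'k::finite"
  shows "(Phi \<eta> r has_derivative (\<lambda>h. (reward_grad r \<theta> + barrier_grad \<eta> \<theta>) \<bullet> h)) (at \<theta>)"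
proof -
  let ?p = "softmax \<theta>"
  have "(Phi \<eta> r has_derivative (\<lambda>h. (\<Sum>a\<in>UNIV. ?p $ a * (h $ a - ?p \<bullet> h) * r $ a)
      + (1/\<eta>) * (\<Sum>a\<in>UNIV. h $ a - ?p \<bullet> h))) (at \<theta>)"
    unfolding Phi_def[abs_def] inner_vec_def[of "softmax _" r] using softmax_pos[of \<theta>]
    by (auto intro!: derivative_eq_intros ext sum.cong simp: less_imp_neq[symmetric]
        simp del: times_divide_eq_left)
  moreover have "(\<Sum>a\<in>UNIV. ?p $ a * (h $ a - ?p \<bullet> h) * r $ a)
      + (1/\<eta>) * (\<Sum>a\<in>UNIV. h $ a - ?p \<bullet> h) = (reward_grad r \<theta> + barrier_grad \<eta> \<theta>) \<bullet> h" for h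
  proof -
    have "(\<Sum>a\<in>UNIV. ?p $ a * (h $ a - ?p \<bullet> h) * r $ a)
        = (\<Sum>a\<in>UNIV. ?p $ a * h $ a * r $ a) - (?p \<bullet> h) * (?p \<bullet> r)"
      unfolding inner_vec_def[of ?p r] by (simp add: algebra_simps sum_subtractf sum_distrib_left)
    also have "\<dots> = reward_grad r \<theta> \<bullet> h"
      unfolding reward_grad_def inner_vec_def[of "vec_lambda _" h] inner_vec_def[of ?p h]
      by (simp add: algebra_simps sum_subtractf sum_distrib_left)
    finally have reward: "(\<Sum>a\<in>UNIV. ?p $ a * (h $ a - ?p \<bullet> h) * r $ a) = reward_grad r \<theta> \<bullet> h" .
    have barrier: "(1/\<eta>) * (\<Sum>a\<in>UNIV. h $ a - ?p \<bullet> h) = barrier_grad \<eta> \<theta> \<bullet> h"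
      unfolding barrier_grad_def inner_vec_def[of "vec_lambda _" h] inner_vec_def[of ?p h]
      by (simp add: algebra_simps sum_subtractf sum_distrib_left)
    show ?thesis unfolding reward barrier by (simp add: inner_add_left)
  qed
  ultimately show ?thesis by simp
qed

lemma Phi_gradient_eq:
  assumes "(Phi \<eta> r has_derivative (\<lambda>h. g \<bullet> h)) (at \<theta>)"
  shows "g = reward_grad r \<theta> + barrier_grad \<eta> \<theta>"
  using has_derivative_unique[OF assms has_derivative_Phi] vector_eq_rdot by metis

lemma power2_norm_add_le: "(norm (x + y))\<^sup>2 \<le> 2 * (norm x)\<^sup>2 + 2 * (norm y)\<^sup>2"
proof -
  have "(norm (x + y))\<^sup>2 \<le> (norm x + norm y)\<^sup>2"
    by (rule power_mono[OF norm_triangle_ineq norm_ge_zero])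
  also have "\<dots> \<le> 2 * (norm x)\<^sup>2 + 2 * (norm y)\<^sup>2"
    using zero_le_power2[of "norm x - norm y"] by (simp add: power2_eq_square algebra_simps)
  finally show ?thesis .
qed

lemma est_grad_eq:
  "est_grad \<eta> \<theta> a Rv = Rv $ a *\<^sub>R (axis a 1 - softmax \<theta>) + barrier_grad \<eta> \<theta>"
proof -
  let ?p = "softmax \<theta>"
  have "?p \<bullet> rhat \<theta> a Rv = Rv $ a"
  proof -
    have "?p $ i * ((if a = i then Rv $ a else 0) / ?p $ i) = (if i = a then Rv $ a else 0)" for i
      using softmax_pos[of \<theta> i] by auto
    then show ?thesis unfolding inner_vec_def rhat_def by simp
  qed
  then show ?thesis
    unfolding est_grad_def barrier_grad_def Let_def vec_eq_iff using softmax_pos[of \<theta>]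
    by (auto simp: rhat_def axis_def algebra_simps less_imp_neq[symmetric])
qed

lemma norm_barrier_grad_le:
  fixes \<theta> :: "real^'k::finite"
  assumes "\<eta> > 0"
  shows "norm (barrier_grad \<eta> \<theta>) \<le> real CARD('k) / \<eta>"
proof -
  define K where "K = real CARD('k)"
  let ?p = "softmax \<theta>"
  have sum_sq: "(\<Sum>i\<in>UNIV. (1 - K * ?p $ i)\<^sup>2) = K\<^sup>2 * (\<Sum>i\<in>UNIV. (?p $ i)\<^sup>2) - K"
    by (simp add: power2_diff power_mult_distrib sum.distrib sum_subtractf
        sum_distrib_left[symmetric] sum_softmax K_def)
  have "(norm (barrier_grad \<eta> \<theta>))\<^sup>2 = (\<Sum>i\<in>UNIV. (1 - K * ?p $ i)\<^sup>2) / \<eta>\<^sup>2"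
    unfolding power2_norm_eq_inner inner_vec_def barrier_grad_def K_def
    by (simp add: sum_divide_distrib power2_eq_square)
  also have "\<dots> = (K\<^sup>2 * (\<Sum>i\<in>UNIV. (?p $ i)\<^sup>2) - K) / \<eta>\<^sup>2"
    by (simp only: sum_sq)
  also have "\<dots> \<le> K\<^sup>2 / \<eta>\<^sup>2"
  proof (rule divide_right_mono)
    have "K\<^sup>2 * (\<Sum>i\<in>UNIV. (?p $ i)\<^sup>2) \<le> K\<^sup>2"
      using sum_softmax_power2_le_1[of \<theta>] by (intro mult_left_le) simp_all
    moreover have "K \<ge> 0" by (simp add: K_def)
    ultimately show "K\<^sup>2 * (\<Sum>i\<in>UNIV. (?p $ i)\<^sup>2) - K \<le> K\<^sup>2" by linarith
  qed simp
  finally have "(norm (barrier_grad \<eta> \<theta>))\<^sup>2 \<le> (K / \<eta>)\<^sup>2"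
    by (simp add: power_divide)
  then have "norm (barrier_grad \<eta> \<theta>) \<le> K / \<eta>"
    by (rule power2_le_imp_le) (use assms in \<open>simp add: K_def\<close>)
  then show ?thesis by (simp add: K_def)
qed

lemma power2_norm_axis_minus_softmax_le:
  "(norm (axis a 1 - softmax \<theta>))\<^sup>2 \<le> 2 * (1 - softmax \<theta> $ a)"
proof -
  let ?p = "softmax \<theta>"
  have "(norm (axis a 1 - ?p))\<^sup>2 = (\<Sum>i\<in>UNIV. (?p $ i)\<^sup>2 + (if i = a then 1 - 2 * ?p $ a else 0))"
    unfolding power2_norm_eq_inner inner_vec_def
    by (rule sum.cong) (auto simp: axis_def power2_eq_square algebra_simps)
  also have "\<dots> = (\<Sum>i\<in>UNIV. (?p $ i)\<^sup>2) + (1 - 2 * ?p $ a)"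
    by (simp add: sum.distrib)
  also have "\<dots> \<le> 2 * (1 - ?p $ a)"
    using sum_softmax_power2_le_1[of \<theta>] by simp
  finally show ?thesis .
qed

lemma est_grad_second_moment_le:
  fixes \<theta> :: "real^'k::finite"
  assumes bounded: "\<forall>a. \<bar>Rv $ a\<bar> \<le> Rmax" and "\<eta> > 0"
  shows "(\<Sum>a\<in>UNIV. softmax \<theta> $ a * (norm (est_grad \<eta> \<theta> a Rv))\<^sup>2)
     \<le> 8 * Rmax\<^sup>2 * (1 - softmax \<theta> $ j) + 2 * (real CARD('k) / \<eta>)\<^sup>2"
proof -
  let ?p = "softmax \<theta>"
  define V where "V = (real CARD('k) / \<eta>)\<^sup>2"
  have V: "(norm (barrier_grad \<eta> \<theta>))\<^sup>2 \<le> V"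
    unfolding V_def using norm_barrier_grad_le[OF \<open>\<eta> > 0\<close>] by (intro power_mono) auto
  have each: "(norm (est_grad \<eta> \<theta> a Rv))\<^sup>2 \<le> 4 * Rmax\<^sup>2 * (1 - ?p $ a) + 2 * V" for a
  proof -
    have "(Rv $ a)\<^sup>2 \<le> Rmax\<^sup>2"
      using power_mono[OF bounded[rule_format, of a] abs_ge_zero, where n = 2] by simp
    then have "(norm (Rv $ a *\<^sub>R (axis a 1 - ?p)))\<^sup>2 \<le> Rmax\<^sup>2 * (2 * (1 - ?p $ a))"
      using power2_norm_axis_minus_softmax_le[of a \<theta>]
      by (simp add: power_mult_distrib mult_mono)
    then have "2 * (norm (Rv $ a *\<^sub>R (axis a 1 - ?p)))\<^sup>2 + 2 * (norm (barrier_grad \<eta> \<theta>))\<^sup>2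
        \<le> 2 * (Rmax\<^sup>2 * (2 * (1 - ?p $ a))) + 2 * V"
      using V by linarith
    then show ?thesis
      unfolding est_grad_eq
      using power2_norm_add_le[of "Rv $ a *\<^sub>R (axis a 1 - ?p)" "barrier_grad \<eta> \<theta>"]
      by (simp add: algebra_simps)
  qed
  have "(\<Sum>a\<in>UNIV. ?p $ a * (norm (est_grad \<eta> \<theta> a Rv))\<^sup>2)
      \<le> (\<Sum>a\<in>UNIV. ?p $ a * (4 * Rmax\<^sup>2 * (1 - ?p $ a) + 2 * V))"
    by (rule sum_mono) (simp add: mult_left_mono each softmax_pos less_imp_le)
  also have "\<dots> = (\<Sum>a\<in>UNIV. 4 * Rmax\<^sup>2 * (?p $ a * (1 - ?p $ a)) + 2 * V * ?p $ a)"
    by (simp add: algebra_simps)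
  also have "\<dots> = 4 * Rmax\<^sup>2 * (\<Sum>a\<in>UNIV. ?p $ a * (1 - ?p $ a)) + 2 * V"
    unfolding sum.distrib sum_distrib_left[symmetric] sum_softmax by simp
  also have "\<dots> \<le> 4 * Rmax\<^sup>2 * (2 * (1 - ?p $ j)) + 2 * V"
    using sum_softmax_mult_compl_le[of \<theta> j] by (rule add_right_mono[OF mult_left_mono]) simp
  finally show ?thesis by (simp add: V_def algebra_simps)
qed

lemma sum_abs_le_sqrt_card_mult_norm:
  fixes x :: "real^'k::finite"
  shows "(\<Sum>i\<in>UNIV. \<bar>x $ i\<bar>) \<le> sqrt (real CARD('k)) * norm x"
proof -
  have "(\<Sum>i\<in>UNIV. \<bar>x $ i\<bar> * 1)\<^sup>2 \<le> (\<Sum>i\<in>UNIV. \<bar>x $ i\<bar>\<^sup>2) * (\<Sum>i\<in>(UNIV::'k set). 1\<^sup>2)"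
    by (rule Cauchy_Schwarz_ineq_sum)
  also have "\<dots> = (sqrt (real CARD('k)) * norm x)\<^sup>2"
    unfolding power_mult_distrib real_sqrt_pow2[OF of_nat_0_le_iff] power2_norm_eq_inner inner_vec_def
    by (simp add: power2_eq_square mult.commute)
  finally have "(\<Sum>i\<in>UNIV. \<bar>x $ i\<bar>)\<^sup>2 \<le> (sqrt (real CARD('k)) * norm x)\<^sup>2"
    by simp
  then show ?thesis by (rule power2_le_imp_le) simp
qed

lemma norm_reward_grad_lower_bound:
  fixes r \<theta> :: "real^'k::finite"
  assumes separated: "\<And>a a'. a \<noteq> a' \<Longrightarrow> D \<le> \<bar>r $ a - r $ a'\<bar>"
  obtains j where "D * (1 - softmax \<theta> $ j) \<le> 2 * sqrt (real CARD('k)) * norm (reward_grad r \<theta>)"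
proof
  let ?p = "softmax \<theta>" and ?w = "reward_grad r \<theta>"
  define dist_mean where "dist_mean i = \<bar>r $ i - ?p \<bullet> r\<bar>" for i
  define j where "j = arg_min_on dist_mean UNIV"
  have closest: "dist_mean j \<le> dist_mean i" for i
    unfolding j_def by (rule arg_min_least) simp_all
  have "D * ?p $ i - (if i = j then D * ?p $ j else 0) \<le> 2 * \<bar>?w $ i\<bar>" for i
  proof (cases "i = j")
    case False
    have "D \<le> \<bar>r $ i - r $ j\<bar>" using separated False by simp
    also have "\<dots> \<le> dist_mean i + dist_mean j" unfolding dist_mean_def by linarith
    also have "\<dots> \<le> 2 * dist_mean i" using closest[of i] by linarith
    finally have "D * ?p $ i \<le> 2 * dist_mean i * ?p $ i"
      using softmax_pos[of \<theta> i] by (intro mult_right_mono) simp_all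
    then show ?thesis
      using False softmax_pos[of \<theta> i] by (simp add: reward_grad_def dist_mean_def abs_mult)
  qed simp
  then have "(\<Sum>i\<in>UNIV. D * ?p $ i - (if i = j then D * ?p $ j else 0)) \<le> (\<Sum>i\<in>UNIV. 2 * \<bar>?w $ i\<bar>)"
    by (rule sum_mono)
  moreover have "(\<Sum>i\<in>UNIV. D * ?p $ i - (if i = j then D * ?p $ j else 0)) = D * (1 - ?p $ j)"
    by (simp add: sum_subtractf sum_distrib_left[symmetric] sum_softmax algebra_simps)
  ultimately show "D * (1 - ?p $ j) \<le> 2 * sqrt (real CARD('k)) * norm ?w"
    using sum_abs_le_sqrt_card_mult_norm[of ?w] by (simp add: sum_distrib_left[symmetric])
qed

lemma finite_gaps: "finite {\<bar>r $ a - r $ a'\<bar> | a a'. a \<noteq> a'}"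
  by (rule finite_subset[of _ "(\<lambda>(a, a'). \<bar>r $ a - r $ a'\<bar>) ` UNIV"]) auto

lemma gap_le:
  assumes "a \<noteq> a'"
  shows "gap r \<le> \<bar>r $ a - r $ a'\<bar>"
  unfolding gap_def using assms finite_gaps by (intro Min_le) auto

lemma two_distinct_arms:
  assumes "CARD('k) \<ge> 2"
  obtains a a' :: "'k::finite" where "a \<noteq> a'"
  using assms card_le_Suc0_iff_eq[of "UNIV :: 'k set"] by force

lemma gap_pos:
  fixes r :: "real^'k::finite"
  assumes "CARD('k) \<ge> 2" and "\<forall>a a'. a \<noteq> a' \<longrightarrow> r $ a \<noteq> r $ a'"
  shows "gap r > 0"
proof -
  obtain a a' :: 'k where "a \<noteq> a'" using two_distinct_arms[OF assms(1)] .
  then have "gap r \<in> {\<bar>r $ a - r $ a'\<bar> | a a'. a \<noteq> a'}"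
    unfolding gap_def using finite_gaps by (intro Min_in) auto
  then show ?thesis using assms(2) by auto
qed

lemma gap_le_twice_bound:
  fixes r :: "real^'k::finite"
  assumes "CARD('k) \<ge> 2" and "\<And>a. \<bar>r $ a\<bar> \<le> B"
  shows "gap r \<le> 2 * B"
proof -
  obtain a a' :: 'k where "a \<noteq> a'" using two_distinct_arms[OF assms(1)] .
  then show ?thesis using gap_le[of a a' r] assms(2)[of a] assms(2)[of a'] by linarith
qed

lemma powr_three_halves:
  fixes x :: real
  assumes "0 \<le> x"
  shows "x powr (3/2) = x * sqrt x"
proof -
  have "x powr (3/2) = x powr (1 + 1/2)" by simp
  also have "\<dots> = x powr 1 * x powr (1/2)" by (rule powr_add)
  finally show ?thesis using assms by (simp add: powr_half_sqrt)
qed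

lemma compl_softmax_le_norm_reward_grad:
  fixes r \<theta> :: "real^'k::finite"
  assumes K2: "CARD('k) \<ge> 2"
    and D_pos: "0 < D" and D_le: "D \<le> 2 * Rmax"
    and separated: "\<And>a a'. a \<noteq> a' \<Longrightarrow> D \<le> \<bar>r $ a - r $ a'\<bar>"
  obtains j where "8 * Rmax\<^sup>2 * (1 - softmax \<theta> $ j)
    \<le> 16 * Rmax ^ 3 * real CARD('k) powr (3/2) / D\<^sup>2 * norm (reward_grad r \<theta>)"
proof -
  define K where "K = real CARD('k)"
  define c where "c = 16 * Rmax ^ 3 * K powr (3/2) / D\<^sup>2"
  let ?p = "softmax \<theta>" and ?w = "reward_grad r \<theta>"
  have K: "K \<ge> 2" using K2 by (simp add: K_def)
  have Rmax: "Rmax > 0" using D_pos D_le by linarith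
  have K_powr: "K powr (3/2) = K * sqrt K" using K by (intro powr_three_halves) simp
  obtain j where j: "D * (1 - ?p $ j) \<le> 2 * sqrt K * norm ?w"
    using norm_reward_grad_lower_bound[OF separated] unfolding K_def by blast
  have "2 * Rmax \<le> K * Rmax" using K Rmax by (intro mult_right_mono) simp_all
  then have "D \<le> K * Rmax" using D_le by linarith
  then have "8 * Rmax\<^sup>2 \<le> 8 * Rmax ^ 3 * K / D"
    using D_pos Rmax by (simp add: field_simps power2_eq_square power3_eq_cube)
  then have "8 * Rmax\<^sup>2 * (1 - ?p $ j) \<le> 8 * Rmax ^ 3 * K / D * (1 - ?p $ j)"
    using softmax_le_1[of \<theta> j] by (intro mult_right_mono) simp_all
  also have "\<dots> = c / (2 * sqrt K) * (D * (1 - ?p $ j))"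
    using D_pos K unfolding c_def K_powr by (simp add: field_simps power2_eq_square)
  also have "\<dots> \<le> c / (2 * sqrt K) * (2 * sqrt K * norm ?w)"
    using j Rmax K by (intro mult_left_mono) (simp_all add: c_def)
  also have "\<dots> = c * norm ?w" using K by simp
  finally show ?thesis using that unfolding c_def K_def by blast
qed

lemma est_grad_second_moment_le_norm_grad:
  fixes r \<theta> g Rv :: "real^'k::finite"
  assumes K2: "CARD('k) \<ge> 2"
    and bounded: "\<forall>a. \<bar>Rv $ a\<bar> \<le> Rmax"
    and eta: "\<eta> > 0"
    and D_pos: "0 < D" and D_le: "D \<le> 2 * Rmax"
    and separated: "\<And>a a'. a \<noteq> a' \<Longrightarrow> D \<le> \<bar>r $ a - r $ a'\<bar>"
    and grad: "g = reward_grad r \<theta> + barrier_grad \<eta> \<theta>"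
  shows "(\<Sum>a\<in>UNIV. softmax \<theta> $ a * (norm (est_grad \<eta> \<theta> a Rv))\<^sup>2)
         \<le> 16 * Rmax ^ 3 * real CARD('k) powr (3/2) / D\<^sup>2 * norm g
           + (2 * real CARD('k) / \<eta>) * (4 * real CARD('k) / \<eta>
               + 16 * Rmax ^ 3 * real CARD('k) powr (3/2) / D\<^sup>2)"
proof -
  define K where "K = real CARD('k)"
  define c where "c = 16 * Rmax ^ 3 * K powr (3/2) / D\<^sup>2"
  let ?w = "reward_grad r \<theta>"
  have c_nonneg: "c \<ge> 0" using D_pos D_le by (simp add: c_def)
  obtain j where "8 * Rmax\<^sup>2 * (1 - softmax \<theta> $ j) \<le> c * norm ?w"
    using compl_softmax_le_norm_reward_grad[OF K2 D_pos D_le separated] unfolding c_def K_def by blast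
  moreover have "norm ?w \<le> norm g + K / \<eta>"
    using grad norm_triangle_ineq4[of g "barrier_grad \<eta> \<theta>"] norm_barrier_grad_le[OF eta, of \<theta>]
    by (simp add: K_def)
  then have "c * norm ?w \<le> c * norm g + c * (K / \<eta>)"
    using c_nonneg by (metis distrib_left mult_left_mono)
  moreover have "c * (K / \<eta>) \<ge> 0" using c_nonneg eta by (simp add: K_def)
  moreover note est_grad_second_moment_le[OF bounded eta, of \<theta> j]
  moreover have "(2 * K / \<eta>) * (4 * K / \<eta> + c) = 8 * (K / \<eta>)\<^sup>2 + 2 * (c * (K / \<eta>))"
    using eta by (simp add: field_simps power2_eq_square)
  ultimately show ?thesis
    unfolding c_def[symmetric] K_def[symmetric] using zero_le_power2[of "K / \<eta>"] by linarith
qed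

lemma (in prob_space) integral_le_nonneg_const:
  fixes c :: real
  assumes "0 \<le> c" and "AE x in M. f x \<le> c"
  shows "(\<integral>x. f x \<partial>M) \<le> c"
  using assms by (cases "integrable M f") (auto simp: integral_le_const not_integrable_integral_eq)

theorem lemma5p1:
  fixes M :: "(real^'k::finite) measure"
    and r \<theta> g :: "real^'k"
    and Rmax \<eta> \<alpha> :: real
  assumes K2: "CARD('k) \<ge> 2"
    and prob: "prob_space M"
    and sets_M: "sets M = sets borel"
    and bounded: "AE Rv in M. \<forall>a. \<bar>Rv $ a\<bar> \<le> Rmax"
    and mean: "\<forall>a. (\<integral>Rv. Rv $ a \<partial>M) = r $ a"
    and distinct: "\<forall>a a'. a \<noteq> a' \<longrightarrow> r $ a \<noteq> r $ a'"
    and eta: "\<eta> > 0"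
    and alpha: "\<alpha> > 0"
    and grad: "(Phi \<eta> r has_derivative (\<lambda>h. g \<bullet> h)) (at \<theta>)"
  shows "(\<integral>Rv. (\<Sum>a\<in>UNIV. softmax \<theta> $ a * (norm (est_grad \<eta> \<theta> a Rv))\<^sup>2) \<partial>M)
         \<le> 16 * Rmax ^ 3 * real CARD('k) powr (3/2) / (gap r)\<^sup>2 * norm g
           + (2 * real CARD('k) / \<eta>) * (4 * real CARD('k) / \<eta>
               + 16 * Rmax ^ 3 * real CARD('k) powr (3/2) / (gap r)\<^sup>2)"
proof -
  interpret prob_space M by (rule prob)
  have "AE Rv in M. 0 \<le> Rmax"
    using bounded by eventually_elim (meson abs_ge_zero order_trans)
  then have Rmax: "0 \<le> Rmax" by simp
  have r_bounded: "\<bar>r $ a\<bar> \<le> Rmax" for a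
  proof -
    have "\<bar>\<integral>Rv. Rv $ a \<partial>M\<bar> \<le> (\<integral>Rv. \<bar>Rv $ a\<bar> \<partial>M)" by (rule integral_abs_bound)
    also have "\<dots> \<le> Rmax"
      using bounded by (intro integral_le_nonneg_const Rmax) auto
    finally show ?thesis using mean by simp
  qed
  have gap: "gap r > 0" "gap r \<le> 2 * Rmax"
    using gap_pos[OF K2 distinct] gap_le_twice_bound[OF K2 r_bounded] .
  have g: "g = reward_grad r \<theta> + barrier_grad \<eta> \<theta>" using Phi_gradient_eq[OF grad] .
  let ?c = "16 * Rmax ^ 3 * real CARD('k) powr (3/2) / (gap r)\<^sup>2"
  have "AE Rv in M. (\<Sum>a\<in>UNIV. softmax \<theta> $ a * (norm (est_grad \<eta> \<theta> a Rv))\<^sup>2)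
      \<le> ?c * norm g + (2 * real CARD('k) / \<eta>) * (4 * real CARD('k) / \<eta> + ?c)"
    using bounded
    by eventually_elim (rule est_grad_second_moment_le_norm_grad[OF K2 _ eta gap gap_le g])
  then show ?thesis
    by (rule integral_le_nonneg_const[rotated]) (use Rmax eta in simp)
qed

end
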